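(* For every $\bar\tau\in(0,1)$ there exist $\bar\rho,\bar R,\bar\phi,\bar\epsilon>0$ such that the following holds. Let $p,q\in\mathbb{H}^n\setminus\{0\}$, $t,\tilde t\ge1$, $R>1$, $\epsilon>0$, and $r\ge\tilde r\ge t\tilde tR$ with $\tilde r\le\epsilon r$, and suppose $q\in\partial_tB_r(p)$ and $0\in\partial_tB_r(p)\cap\partial_{\tilde t}B_{\tilde r}(q)$. If $R>\bar R$, $\epsilon<\bar\epsilon$, $|\tau_p|\le\bar\tau$ and $\max_{1\le i\le n}\phi_i(p,q)<\bar\phi$, then $d(\hat p,\hat q)>\bar\rho$.
   Context: $\mathbb{H}^n=\mathbb{C}^n\times\mathbb{R}$ with product $(z,\tau)(w,\sigma)=(z+w,\tau+\sigma+\tfrac12\operatorname{Im}\langle z,w\rangle)$, $\langle z,w\rangle=\sum_j\overline{z_j}w_j$, identity $0$; dilations $\delta_\lambda(z,\tau)=(\lambda z,\lambda^2\tau)$; $d(p,q)=\inf\{r>0:\delta_{1/r}(pq^{-1})\in B_{eucl}\}$ ($B_{eucl}$ the closed Euclidean unit ball in $\mathbb{R}^{2n+1}$), so the unit sphere of $d$ about $0$ is the Euclidean unit sphere. $B_r(p)=\{y:d(y,p)\le r\}$, $\partial B_r(p)=\{y:d(y,p)=r\}$, $\partial_tB_r(p)=\{y:d(y,\partial B_r(p))\le t\}$. For $p\ne0$ let $\hat p=\delta_{1/d(p,0)}p=(z_p,\tau_p)$, so $\|z_p\|^2+\tau_p^2=1$; write $(z_p)_j=\rho_j(p)e^{i\phi_j(p)}$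 with $\rho_j(p)\ge0$, $\phi_j(p)\in(-\pi,\pi]$. For $p,q\ne0$, $\phi_j(p,q)\in[0,\pi]$ is the magnitude of the angle between $e^{i\phi_j(p)}$ and $e^{i\phi_j(q)}$. *)

theory Defs
  imports "HOL-Analysis.Analysis"
begin

text \<open>Points of the Heisenberg group H^n = C^n x R; the dimension n is the
cardinality of the finite index type 'n.\<close>
type_synonym ('n) heis = "(complex ^ 'n) \<times> real"

definition herm :: "complex ^ ('n::finite) \<Rightarrow> complex ^ 'n \<Rightarrow> complex" where
  "herm z w = (\<Sum>j\<in>UNIV. cnj (z $ j) * w $ j)"

definition heis_mult :: "('n::finite) heis \<Rightarrow> 'n heis \<Rightarrow> 'n heis" where
  "heis_mult p q = (fst p + fst q, snd p + snd q + Im (herm (fst p) (fst q)) / 2)"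

definition heis_inv :: "('n::finite) heis \<Rightarrow> 'n heis" where
  "heis_inv p = (- fst p, - snd p)"

definition heis_dil :: "real \<Rightarrow> ('n::finite) heis \<Rightarrow> 'n heis" where
  "heis_dil l p = (l *\<^sub>R fst p, l\<^sup>2 * snd p)"

definition in_eucl_ball :: "('n::finite) heis \<Rightarrow> bool" where
  "in_eucl_ball p \<longleftrightarrow> (\<Sum>j\<in>UNIV. (cmod (fst p $ j))\<^sup>2) + (snd p)\<^sup>2 \<le> 1"

definition heis_dist :: "('n::finite) heis \<Rightarrow> 'n heis \<Rightarrow> real" where
  "heis_dist p q = Inf {r. r > 0 \<and> in_eucl_ball (heis_dil (1 / r) (heis_mult p (heis_inv q)))}"

definition heis_sphere :: "real \<Rightarrow> ('n::finite) heis \<Rightarrow> 'n heis set" where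
  "heis_sphere r p = {y. heis_dist y p = r}"

definition setdist_heis :: "('n::finite) heis \<Rightarrow> 'n heis set \<Rightarrow> real" where
  "setdist_heis y S = Inf ((\<lambda>s. heis_dist y s) ` S)"

definition shell :: "real \<Rightarrow> real \<Rightarrow> ('n::finite) heis \<Rightarrow> 'n heis set" where
  "shell t r p = {y. setdist_heis y (heis_sphere r p) \<le> t}"

definition hat :: "('n::finite) heis \<Rightarrow> 'n heis" where
  "hat p = heis_dil (1 / heis_dist p 0) p"

text \<open>phi_j(p) in (-pi,pi]: argument of the j-th coordinate of z_p (Arg 0 = 0).\<close>
definition phase :: "'n::finite \<Rightarrow> 'n heis \<Rightarrow> real" where
  "phase j p = Arg (fst (hat p) $ j)"

text \<open>phi_j(p,q) in [0,pi]: magnitude of the angle between e^{i phi_j(p)} and e^{i phi_j(q)}.\<close>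
definition phase_angle :: "'n::finite \<Rightarrow> 'n heis \<Rightarrow> 'n heis \<Rightarrow> real" where
  "phase_angle j p q = arccos (cos (phase j p - phase j q))"

end

theory Submission
  imports Defs
begin

text \<open>The distance is d(x, y) = N(x y^-1), where the gauge N(z, tau) is the positive root of
  N^4 = |z|^2 N^2 + tau^2; N is homogeneous under dilations and satisfies the quasi-triangle
  inequality N(x y) <= N(x) + 3 N(y). Since 0 and q lie within O(t) of the sphere of radius r
  about p, we get |p| = r + O(t) and d(q, p) >= r - O(t), while |q| = rt + O(tt) is at most a
  small multiple u <= 4 eps of |p|. If hat q were close to hat p, with hat p away from the
  vertical axis (|tau_p| <= taub), then q = dil |p| (dil u (hat q)), and a second order expansion
  of the gauge gives d(q, p) <= |p| - (1 - taub^2) |q| / 4: moving from 0 a distance |q| roughly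
  towards p brings one closer to p by a fixed fraction of |q|. As |q| >= rt/2 >= t R/2, this
  contradicts d(q, p) >= |p| - O(t) once R is large.\<close>

text \<open>The gauge of (z, \<tau>) is the unique r \<ge> 0 with r^4 = |z|^2 r^2 + \<tau>^2, i.e. the dilation
  factor that moves (z, \<tau>) onto the Euclidean unit sphere.\<close>
definition heis_gauge :: "('n::finite) heis \<Rightarrow> real" where
  "heis_gauge x = sqrt (((norm (fst x))\<^sup>2 + sqrt ((norm (fst x))^4 + 4 * (snd x)\<^sup>2)) / 2)"

lemma heis_gauge_nonneg: "heis_gauge x \<ge> 0"
  unfolding heis_gauge_def by simp

lemma heis_gauge_power2:
  "(heis_gauge x)\<^sup>2 = ((norm (fst x))\<^sup>2 + sqrt ((norm (fst x))^4 + 4 * (snd x)\<^sup>2)) / 2"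
  unfolding heis_gauge_def by simp

lemma heis_gauge_power4: "(heis_gauge x)^4 = (norm (fst x))\<^sup>2 * (heis_gauge x)\<^sup>2 + (snd x)\<^sup>2"
proof -
  define S where "S = sqrt ((norm (fst x))^4 + 4 * (snd x)\<^sup>2)"
  have "S\<^sup>2 = (norm (fst x))^4 + 4 * (snd x)\<^sup>2"
    unfolding S_def by simp
  moreover have "(heis_gauge x)^4 = ((heis_gauge x)\<^sup>2)\<^sup>2"
    by simp
  ultimately show ?thesis
    unfolding heis_gauge_power2 S_def[symmetric] by (simp add: power2_eq_square power4_eq_xxxx field_simps)
qed

lemma heis_gauge_bounds: "norm (fst x) \<le> heis_gauge x" "\<bar>snd x\<bar> \<le> (heis_gauge x)\<^sup>2"
proof -
  define S where "S = sqrt ((norm (fst x))^4 + 4 * (snd x)\<^sup>2)"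
  have "sqrt (((norm (fst x))\<^sup>2)\<^sup>2) \<le> S" "sqrt ((2 * snd x)\<^sup>2) \<le> S"
    unfolding S_def by (intro real_sqrt_le_mono; simp add: power2_eq_square power4_eq_xxxx)+
  then have n: "(norm (fst x))\<^sup>2 \<le> S" and t: "2 * \<bar>snd x\<bar> \<le> S"
    by (simp_all only: real_sqrt_abs abs_power2 abs_mult abs_numeral)
  have "(heis_gauge x)\<^sup>2 = ((norm (fst x))\<^sup>2 + S) / 2"
    unfolding heis_gauge_power2 S_def ..
  with n t zero_le_power2[of "norm (fst x)"]
  have "(norm (fst x))\<^sup>2 \<le> (heis_gauge x)\<^sup>2" "\<bar>snd x\<bar> \<le> (heis_gauge x)\<^sup>2"
    by (simp_all, linarith)
  then show "norm (fst x) \<le> heis_gauge x" "\<bar>snd x\<bar> \<le> (heis_gauge x)\<^sup>2"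
    using heis_gauge_nonneg power2_le_imp_le by blast+
qed

lemma heis_gauge_le_iff:
  assumes "r > 0"
  shows "heis_gauge x \<le> r \<longleftrightarrow> (norm (fst x))\<^sup>2 * r\<^sup>2 + (snd x)\<^sup>2 \<le> r^4"
proof -
  define n where "n = (norm (fst x))\<^sup>2"
  define S where "S = sqrt ((norm (fst x))^4 + 4 * (snd x)\<^sup>2)"
  have S0: "S \<ge> 0" and S2: "S\<^sup>2 = n\<^sup>2 + 4 * (snd x)\<^sup>2" and n0: "n \<ge> 0"
    unfolding S_def n_def by (simp_all flip: power_mult)
  have "heis_gauge x \<le> r \<longleftrightarrow> (heis_gauge x)\<^sup>2 \<le> r\<^sup>2"
    using assms heis_gauge_nonneg[of x] by (simp add: power2_le_iff_abs_le)
  also have "\<dots> \<longleftrightarrow> S \<le> 2 * r\<^sup>2 - n"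
    unfolding heis_gauge_power2 S_def[symmetric] n_def[symmetric] by auto
  also have "\<dots> \<longleftrightarrow> 0 \<le> 2 * r\<^sup>2 - n \<and> S\<^sup>2 \<le> (2 * r\<^sup>2 - n)\<^sup>2"
    using S0 by (metis order_trans power2_le_imp_le power_mono)
  also have "\<dots> \<longleftrightarrow> n * r\<^sup>2 + (snd x)\<^sup>2 \<le> r^4"
  proof
    assume "n * r\<^sup>2 + (snd x)\<^sup>2 \<le> r^4"
    then have "r\<^sup>2 * (r\<^sup>2 - n) \<ge> 0"
      by (simp add: power2_eq_square power4_eq_xxxx algebra_simps) (smt (verit) zero_le_square)
    then have "n \<le> r\<^sup>2"
      using assms by (simp add: zero_le_mult_iff)
    with \<open>n * r\<^sup>2 + (snd x)\<^sup>2 \<le> r^4\<close> n0 show "0 \<le> 2 * r\<^sup>2 - n \<and> S\<^sup>2 \<le> (2 * r\<^sup>2 - n)\<^sup>2"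
      unfolding S2 by (simp add: power2_eq_square power4_eq_xxxx algebra_simps)
  qed (use S2 in \<open>simp add: power2_eq_square power4_eq_xxxx algebra_simps\<close>)
  finally show ?thesis
    unfolding n_def .
qed

lemma norm_vec_power2: "(norm (z :: 'a::real_normed_vector ^ 'n))\<^sup>2 = (\<Sum>j\<in>UNIV. (norm (z $ j))\<^sup>2)"
  by (simp add: norm_vec_def L2_set_def sum_nonneg)

lemma in_eucl_ball_dil_iff:
  assumes "r > 0"
  shows "in_eucl_ball (heis_dil (1 / r) x) \<longleftrightarrow> heis_gauge x \<le> r"
proof -
  have "in_eucl_ball (heis_dil (1 / r) x) \<longleftrightarrow> (norm ((1 / r) *\<^sub>R fst x))\<^sup>2 + ((1 / r)\<^sup>2 * snd x)\<^sup>2 \<le> 1"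
    unfolding in_eucl_ball_def heis_dil_def
    by (simp add: norm_vec_power2 power_divide sum_divide_distrib[symmetric])
  also have "\<dots> \<longleftrightarrow> (norm (fst x))\<^sup>2 * r\<^sup>2 + (snd x)\<^sup>2 \<le> r^4"
    using assms by (simp add: power2_eq_square power4_eq_xxxx field_simps)
  finally show ?thesis
    using heis_gauge_le_iff[OF assms] by blast
qed

lemma heis_dist_eq_gauge: "heis_dist x y = heis_gauge (heis_mult x (heis_inv y))"
proof -
  define N where "N = heis_gauge (heis_mult x (heis_inv y))"
  have "heis_dist x y = Inf {r. r > 0 \<and> N \<le> r}"
    unfolding heis_dist_def N_def by (metis in_eucl_ball_dil_iff)
  also have "\<dots> = N"
  proof (cases "N = 0")
    case True
    then have "{r. r > 0 \<and> N \<le> r} = {0<..}"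
      by auto
    then show ?thesis
      using True by simp
  next
    case False
    then have "{r. r > 0 \<and> N \<le> r} = {N..}"
      using heis_gauge_nonneg[of "heis_mult x (heis_inv y)"] N_def by auto
    then show ?thesis
      by simp
  qed
  finally show ?thesis
    unfolding N_def .
qed

lemma herm_add_left: "herm (a + b) c = herm a c + herm b c"
  by (simp add: herm_def distrib_right sum.distrib)

lemma herm_add_right: "herm a (b + c) = herm a b + herm a c"
  by (simp add: herm_def distrib_left sum.distrib)

lemma herm_minus_left: "herm (- a) c = - herm a c"
  by (simp add: herm_def sum_negf)

lemma herm_minus_right: "herm a (- c) = - herm a c"
  by (simp add: herm_def sum_negf)

lemma herm_diff_left: "herm (a - b) c = herm a c - herm b c"
  by (simp add: herm_def left_diff_distrib sum_subtractf)

lemma herm_scaleR_left: "herm (s *\<^sub>R a) c = of_real s * herm a c"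
  unfolding herm_def vector_scaleR_component by (simp add: scaleR_conv_of_real sum_distrib_left mult.assoc)

lemma herm_scaleR_right: "herm a (s *\<^sub>R c) = of_real s * herm a c"
  unfolding herm_def vector_scaleR_component by (simp add: scaleR_conv_of_real sum_distrib_left mult.left_commute)

lemma herm_zero_left [simp]: "herm 0 a = 0"
  by (simp add: herm_def)

lemma herm_zero_right [simp]: "herm a 0 = 0"
  by (simp add: herm_def)

lemma herm_commute: "herm b a = cnj (herm a b)"
  by (simp add: herm_def mult.commute)

lemma Im_herm_self [simp]: "Im (herm a a) = 0"
  by (simp add: herm_def algebra_simps)

lemma abs_Im_herm_le: "\<bar>Im (herm a b)\<bar> \<le> norm a * norm b"
proof -
  have "cmod (herm a b) \<le> (\<Sum>j\<in>UNIV. cmod (cnj (a $ j) * b $ j))"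
    unfolding herm_def by (rule norm_sum)
  also have "\<dots> = (\<Sum>j\<in>UNIV. \<bar>cmod (a $ j)\<bar> * \<bar>cmod (b $ j)\<bar>)"
    by (simp add: norm_mult)
  also have "\<dots> \<le> norm a * norm b"
    unfolding norm_vec_def by (rule L2_set_mult_ineq)
  finally show ?thesis
    using abs_Im_le_cmod order_trans by blast
qed

lemma heis_mult_assoc: "heis_mult (heis_mult x y) w = heis_mult x (heis_mult y w)"
  by (simp add: heis_mult_def herm_add_left herm_add_right) (simp add: field_simps)

lemma heis_mult_0_left [simp]: "heis_mult 0 x = x"
  by (simp add: heis_mult_def zero_prod_def)

lemma heis_mult_0_right [simp]: "heis_mult x 0 = x"
  by (simp add: heis_mult_def zero_prod_def)

lemma heis_inv_0 [simp]: "heis_inv 0 = 0"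
  by (simp add: heis_inv_def zero_prod_def)

lemma heis_inv_inv [simp]: "heis_inv (heis_inv x) = x"
  by (simp add: heis_inv_def)

lemma heis_mult_inv_right [simp]: "heis_mult x (heis_inv x) = 0"
  by (simp add: heis_mult_def heis_inv_def herm_minus_right zero_prod_def)

lemma heis_mult_inv_cancel_left [simp]: "heis_mult (heis_inv x) (heis_mult x y) = y"
  by (simp add: heis_mult_def heis_inv_def herm_add_right herm_minus_left)

lemma heis_inv_mult: "heis_inv (heis_mult x y) = heis_mult (heis_inv y) (heis_inv x)"
  by (simp add: heis_mult_def heis_inv_def herm_minus_left herm_minus_right herm_commute[of "fst y"])

lemma heis_dil_mult: "heis_dil l (heis_mult x y) = heis_mult (heis_dil l x) (heis_dil l y)"
  by (simp add: heis_mult_def heis_dil_def herm_scaleR_left herm_scaleR_right scaleR_add_right)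
    (simp add: power2_eq_square algebra_simps)

lemma heis_dil_inv: "heis_dil l (heis_inv x) = heis_inv (heis_dil l x)"
  by (simp add: heis_dil_def heis_inv_def)

lemma heis_dil_dil: "heis_dil a (heis_dil b x) = heis_dil (a * b) x"
  by (simp add: heis_dil_def power_mult_distrib)

lemma heis_dil_1 [simp]: "heis_dil 1 x = x"
  by (simp add: heis_dil_def)

lemma heis_gauge_eq_0_iff: "heis_gauge x = 0 \<longleftrightarrow> x = 0"
proof
  assume "heis_gauge x = 0"
  then show "x = 0"
    using heis_gauge_bounds[of x] by (simp add: prod_eq_iff)
qed (simp add: heis_gauge_def)

lemma heis_gauge_dil:
  assumes "l \<ge> 0"
  shows "heis_gauge (heis_dil l x) = l * heis_gauge x"
proof -
  define n where "n = (norm (fst x))\<^sup>2"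
  define S where "S = sqrt ((norm (fst x))^4 + 4 * (snd x)\<^sup>2)"
  have "(norm (fst (heis_dil l x)))^4 + 4 * (snd (heis_dil l x))\<^sup>2
      = (l\<^sup>2)\<^sup>2 * ((norm (fst x))^4 + 4 * (snd x)\<^sup>2)"
    using assms by (simp add: heis_dil_def algebra_simps flip: power_mult)
  then have "sqrt ((norm (fst (heis_dil l x)))^4 + 4 * (snd (heis_dil l x))\<^sup>2) = l\<^sup>2 * S"
    unfolding S_def by (simp only: real_sqrt_mult real_sqrt_abs abs_power2)
  moreover have "(norm (fst (heis_dil l x)))\<^sup>2 = l\<^sup>2 * n"
    using assms unfolding n_def by (simp add: heis_dil_def power_mult_distrib)
  ultimately have "heis_gauge (heis_dil l x) = sqrt (l\<^sup>2 * ((n + S) / 2))"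
    unfolding heis_gauge_def by (simp add: algebra_simps)
  also have "\<dots> = l * heis_gauge x"
    using assms unfolding real_sqrt_mult heis_gauge_def n_def S_def by simp
  finally show ?thesis .
qed

lemma heis_gauge_inv [simp]: "heis_gauge (heis_inv x) = heis_gauge x"
  by (simp add: heis_gauge_def heis_inv_def)

lemma heis_dist_0_left [simp]: "heis_dist 0 x = heis_gauge x"
  by (simp add: heis_dist_eq_gauge)

lemma heis_dist_0_right [simp]: "heis_dist x 0 = heis_gauge x"
  by (simp add: heis_dist_eq_gauge)

lemma heis_dist_commute: "heis_dist x y = heis_dist y x"
  unfolding heis_dist_eq_gauge by (metis heis_gauge_inv heis_inv_inv heis_inv_mult)

lemma heis_dist_dil:
  assumes "l \<ge> 0"
  shows "heis_dist (heis_dil l x) (heis_dil l y) = l * heis_dist x y"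
  using assms by (simp add: heis_dist_eq_gauge heis_gauge_dil heis_dil_mult flip: heis_dil_inv heis_dil_mult)

text \<open>With a = N x, b = N y and Z, W, T, S the sizes |z|, |w|, |\<tau>|, |\<sigma>| of the components
  of x = (z, \<tau>) and y = (w, \<sigma>), this is the inequality characterising N(x y) \<le> a + 3 b.\<close>
lemma quasi_triangle_polynomial_ineq:
  fixes a b Z W T S :: real
  assumes "0 \<le> b" and Z: "0 \<le> Z" "Z \<le> a" and W: "0 \<le> W" "W \<le> b"
    and T: "0 \<le> T" "T \<le> a\<^sup>2" and S: "0 \<le> S" "S \<le> b\<^sup>2"
    and a4: "a^4 = Z\<^sup>2 * a\<^sup>2 + T\<^sup>2"
  shows "(Z + W)\<^sup>2 * (a + 3 * b)\<^sup>2 + (T + S + Z * W / 2)\<^sup>2 \<le> (a + 3 * b)^4"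
proof -
  define l where "l = a + 3 * b"
  have "0 \<le> a" "a \<le> l"
    using Z \<open>0 \<le> b\<close> unfolding l_def by auto
  then have la: "l\<^sup>2 - a\<^sup>2 \<ge> 0"
    by (simp add: power_mono)
  have "(Z + W)\<^sup>2 * l\<^sup>2 + (T + S + Z * W / 2)\<^sup>2 \<le> (Z + b)\<^sup>2 * l\<^sup>2 + (T + b\<^sup>2 + Z * b / 2)\<^sup>2"
    using Z W T S by (intro add_mono mult_right_mono power_mono) (auto intro!: mult_left_mono)
  also have "\<dots> = a^4 + Z\<^sup>2 * (l\<^sup>2 - a\<^sup>2) + 2 * Z * b * l\<^sup>2 + b\<^sup>2 * l\<^sup>2 + 2 * T * b\<^sup>2 + T * Z * b
      + (b\<^sup>2 + Z * b / 2)\<^sup>2"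
    using a4 by (simp add: power2_eq_square algebra_simps)
  also have "\<dots> \<le> a^4 + a\<^sup>2 * (l\<^sup>2 - a\<^sup>2) + 2 * a * b * l\<^sup>2 + b\<^sup>2 * l\<^sup>2 + 2 * a\<^sup>2 * b\<^sup>2 + a\<^sup>2 * a * b
      + (b\<^sup>2 + a * b / 2)\<^sup>2"
    using Z T \<open>0 \<le> b\<close> la
    by (intro add_mono mult_right_mono mult_mono power_mono order_refl) (auto intro: mult_right_mono)
  also have "\<dots> \<le> l^4"
    unfolding l_def using \<open>0 \<le> a\<close> \<open>0 \<le> b\<close> by (simp add: power2_eq_square power4_eq_xxxx algebra_simps)
  finally show ?thesis
    unfolding l_def .
qed

lemma heis_gauge_mult_le: "heis_gauge (heis_mult x y) \<le> heis_gauge x + 3 * heis_gauge y"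
proof (cases "x = 0 \<and> y = 0")
  case False
  define a b where "a = heis_gauge x" and "b = heis_gauge y"
  have "a \<ge> 0" "b \<ge> 0"
    unfolding a_def b_def by (simp_all add: heis_gauge_nonneg)
  moreover have "a \<noteq> 0 \<or> b \<noteq> 0"
    using False unfolding a_def b_def heis_gauge_eq_0_iff by simp
  ultimately have l: "a + 3 * b > 0"
    by linarith
  have vert: "(snd x + snd y + Im (herm (fst x) (fst y)) / 2)\<^sup>2
      \<le> (\<bar>snd x\<bar> + \<bar>snd y\<bar> + norm (fst x) * norm (fst y) / 2)\<^sup>2"
    using abs_Im_herm_le[of "fst x" "fst y"] by (simp flip: abs_le_square_iff)
  have "(norm (fst x + fst y))\<^sup>2 * (a + 3 * b)\<^sup>2 + (snd x + snd y + Im (herm (fst x) (fst y)) / 2)\<^sup>2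
      \<le> (norm (fst x) + norm (fst y))\<^sup>2 * (a + 3 * b)\<^sup>2
        + (\<bar>snd x\<bar> + \<bar>snd y\<bar> + norm (fst x) * norm (fst y) / 2)\<^sup>2"
    by (intro add_mono[OF _ vert] mult_right_mono power_mono norm_triangle_ineq) simp_all
  also have "\<dots> \<le> (a + 3 * b)^4"
    using heis_gauge_bounds[of x] heis_gauge_bounds[of y] heis_gauge_power4[of x] \<open>b \<ge> 0\<close>
    unfolding a_def b_def by (intro quasi_triangle_polynomial_ineq) auto
  finally have "heis_gauge (heis_mult x y) \<le> a + 3 * b"
    unfolding heis_gauge_le_iff[OF l] by (simp add: heis_mult_def)
  then show ?thesis
    unfolding a_def b_def .
qed (auto simp: heis_gauge_nonneg)

lemma heis_dist_quasi_triangle: "heis_dist x z \<le> 3 * heis_dist x y + heis_dist y z"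
proof -
  have "heis_dist x z = heis_dist z x"
    by (rule heis_dist_commute)
  also have "\<dots> = heis_gauge (heis_mult (heis_mult z (heis_inv y)) (heis_mult y (heis_inv x)))"
    by (simp add: heis_dist_eq_gauge heis_mult_assoc)
  also have "\<dots> \<le> heis_dist z y + 3 * heis_dist y x"
    unfolding heis_dist_eq_gauge by (rule heis_gauge_mult_le)
  finally show ?thesis
    using heis_dist_commute[of z y] heis_dist_commute[of y x] by linarith
qed

lemma heis_gauge_vertical: "r \<ge> 0 \<Longrightarrow> heis_gauge (0, r\<^sup>2) = r"
  by (simp add: heis_gauge_def real_sqrt_mult power4_eq_xxxx power2_eq_square)

lemma heis_sphere_nonempty:
  assumes "r \<ge> 0"
  shows "heis_sphere r p \<noteq> {}"
proof -
  have "heis_dist (heis_mult (0, r\<^sup>2) p) p = r"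
    using assms by (simp add: heis_dist_eq_gauge heis_mult_assoc heis_gauge_vertical)
  then show ?thesis
    unfolding heis_sphere_def by blast
qed

lemma shell_heis_dist_bounds:
  assumes "x \<in> shell t r p" "t > 0" "r \<ge> 0"
  shows "r - 6 * t < heis_dist x p" "heis_dist x p < r + 6 * t"
proof -
  have "Inf ((\<lambda>s. heis_dist x s) ` heis_sphere r p) < 2 * t"
    using assms unfolding shell_def setdist_heis_def by auto
  moreover have "(\<lambda>s. heis_dist x s) ` heis_sphere r p \<noteq> {}"
    using heis_sphere_nonempty[OF \<open>r \<ge> 0\<close>] by simp
  ultimately have "\<exists>s \<in> heis_sphere r p. heis_dist x s < 2 * t"
    by (metis cInf_lessD imageE)
  then obtain s where s: "heis_dist s p = r" "heis_dist x s < 2 * t"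
    unfolding heis_sphere_def by blast
  show "r - 6 * t < heis_dist x p"
    using heis_dist_quasi_triangle[of s p x] heis_dist_commute[of s x] s by linarith
  show "heis_dist x p < r + 6 * t"
    using heis_dist_quasi_triangle[of x p s] s by linarith
qed

lemma heis_gauge_hat:
  assumes "x \<noteq> 0"
  shows "heis_gauge (hat x) = 1"
  using assms heis_gauge_nonneg[of x] heis_gauge_eq_0_iff[of x]
  by (simp add: hat_def heis_gauge_dil)

lemma heis_dil_gauge_hat:
  assumes "x \<noteq> 0"
  shows "heis_dil (heis_gauge x) (hat x) = x"
  using assms heis_gauge_eq_0_iff[of x] by (simp add: hat_def heis_dil_dil)

lemma hat_unit_sphere:
  assumes "x \<noteq> 0"
  shows "(norm (fst (hat x)))\<^sup>2 + (snd (hat x))\<^sup>2 = 1"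
  using heis_gauge_power4[of "hat x"] heis_gauge_hat[OF assms] by simp

text \<open>For unit points a = (z_a, \<tau>_a), b = (z_b, \<tau>_b), the point (dil u b) a^-1 has horizontal
  part of squared length u^2 B - 2 u R + A and vertical part u^2 \<tau>_b - \<tau>_a - u I / 2, where
  A = |z_a|^2, B = |z_b|^2 and R + i I = <z_b, z_a>. The two parts are bounded separately and
  combined with Bernoulli's inequality (1 - c)^4 \<ge> 1 - 4 c.\<close>
lemma vertical_step_bound:
  fixes al u ta tb I :: real
  assumes "0 < al" "al \<le> 1" "0 < u" "u \<le> al / 10"
    and "ta\<^sup>2 \<le> 1" "\<bar>tb\<bar> \<le> 1" "\<bar>I\<bar> \<le> al / 6"
  shows "(u\<^sup>2 * tb - ta - u * I / 2)\<^sup>2 \<le> ta\<^sup>2 + u * al / 6 + 3 * u\<^sup>2"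
proof -
  define e where "e = u * I / 2 - u\<^sup>2 * tb"
  have "\<bar>u * I / 2\<bar> \<le> u * al / 12" "\<bar>u\<^sup>2 * tb\<bar> \<le> u\<^sup>2"
    using assms by (auto simp: abs_mult mult_left_le)
  then have e: "\<bar>e\<bar> \<le> u * al / 12 + u\<^sup>2"
    unfolding e_def by linarith
  moreover have "u * al \<le> u" "u * u \<le> u * (1 / 10)"
    using assms by (auto intro: mult_left_le mult_left_mono)
  then have "u * al / 12 + u\<^sup>2 \<le> u"
    using \<open>0 < u\<close> unfolding power2_eq_square by linarith
  ultimately have "e\<^sup>2 \<le> u\<^sup>2"
    by (simp flip: abs_le_square_iff)
  moreover have "ta * e \<le> \<bar>e\<bar>"
    using \<open>ta\<^sup>2 \<le> 1\<close> abs_square_le_1[of ta] abs_mult[of ta e] mult_left_le_one_le[of "\<bar>e\<bar>" "\<bar>ta\<bar>"]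
    by (smt (verit) abs_ge_zero abs_ge_self)
  ultimately show ?thesis
    using e unfolding e_def by (simp add: power2_eq_square algebra_simps)
qed

lemma horizontal_step_bound:
  fixes al u A B R :: real
  assumes "0 < al" "al \<le> 1" "0 < u" "u \<le> al / 10"
    and "al \<le> A" "A \<le> 1" "0 \<le> B" "B \<le> 1" "A - al / 6 \<le> R" "R \<le> 1"
  shows "(u\<^sup>2 * B - 2 * u * R + A) * (1 - al / 4 * u)\<^sup>2
    \<le> u\<^sup>2 - 2 * u * (A - al / 6) + A - al / 4 * u * (A / 2)"
proof -
  define X c where "X = u\<^sup>2 * B - 2 * u * R + A" and "c = al / 4 * u"
  have "u\<^sup>2 * B \<le> u\<^sup>2" "2 * u * (A - al / 6) \<le> 2 * u * R" "2 * u * R \<le> 2 * u"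
    using assms by (simp_all add: mult_left_le)
  moreover have "0 \<le> u\<^sup>2 * B"
    using assms by simp
  ultimately have X: "X \<le> u\<^sup>2 - 2 * u * (A - al / 6) + A" and X2: "A / 2 \<le> X"
    using assms unfolding X_def by linarith+
  have "al * u \<le> 1 * 1"
    using assms by (intro mult_mono) auto
  then have c: "0 \<le> c" "c \<le> 1"
    using assms unfolding c_def by auto
  have "X * (1 - c)\<^sup>2 \<le> X * (1 - c)"
    using X2 assms c by (intro mult_left_mono) (auto simp: power2_eq_square mult_left_le_one_le)
  also have "\<dots> \<le> X - c * (A / 2)"
    using mult_left_mono[OF X2 c(1)] by (simp add: algebra_simps)
  finally show ?thesis
    using X unfolding X_def c_def by linarith
qed

lemma dil_step_polynomial_ineq:
  fixes al u A B R I ta tb :: real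
  assumes al: "0 < al" "al \<le> 1" and u: "0 < u" "u \<le> al / 10"
    and A: "al \<le> A" "A \<le> 1" and B: "0 \<le> B" "B \<le> 1"
    and R: "A - al / 6 \<le> R" "R \<le> 1" and I: "\<bar>I\<bar> \<le> al / 6"
    and ta: "ta\<^sup>2 = 1 - A" and tb: "\<bar>tb\<bar> \<le> 1"
  shows "(u\<^sup>2 * B - 2 * u * R + A) * (1 - al / 4 * u)\<^sup>2 + (u\<^sup>2 * tb - ta - u * I / 2)\<^sup>2
    \<le> (1 - al / 4 * u)^4"
proof -
  have "1 - al * u \<le> (1 - al / 4 * u)^4"
    using Bernoulli_inequality_even[of 4 "- (al / 4 * u)"] by simp
  moreover have "(u\<^sup>2 * tb - ta - u * I / 2)\<^sup>2 \<le> (1 - A) + u * al / 6 + 3 * u\<^sup>2"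
    using vertical_step_bound[OF al u _ tb I, of ta] ta A al by simp
  moreover have "u\<^sup>2 - 2 * u * (A - al / 6) + A - al / 4 * u * (A / 2) + ((1 - A) + u * al / 6 + 3 * u\<^sup>2)
      \<le> 1 - al * u"
  proof -
    have "u * (4 * u + 3 / 2 * al) \<le> u * (2 * A)"
      using al u A by (intro mult_left_mono) auto
    moreover have "0 \<le> u * al * A"
      using al u A by simp
    ultimately show ?thesis
      by (simp add: algebra_simps power2_eq_square)
  qed
  ultimately show ?thesis
    using horizontal_step_bound[OF al u A B R] by linarith
qed

lemma heis_dist_dil_nearby_le:
  fixes a b :: "('n::finite) heis"
  assumes al: "0 < al" "al \<le> 1" and u: "0 < u" "u \<le> al / 10"
    and a: "(norm (fst a))\<^sup>2 + (snd a)\<^sup>2 = 1" and b: "(norm (fst b))\<^sup>2 + (snd b)\<^sup>2 = 1"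
    and horizontal: "al \<le> (norm (fst a))\<^sup>2" and close: "norm (fst b - fst a) \<le> al / 6"
  shows "heis_dist (heis_dil u b) a \<le> 1 - al / 4 * u"
proof -
  obtain Za ta Zb tb where ab: "a = (Za, ta)" "b = (Zb, tb)"
    by (cases a, cases b) simp
  define A B R I where "A = (norm Za)\<^sup>2" and "B = (norm Zb)\<^sup>2"
    and "R = inner Zb Za" and "I = Im (herm Zb Za)"
  have unit: "(norm Za)\<^sup>2 + ta\<^sup>2 = 1" "(norm Zb)\<^sup>2 + tb\<^sup>2 = 1"
    using a b ab by simp_all
  moreover have "0 \<le> ta\<^sup>2" "0 \<le> tb\<^sup>2" "0 \<le> (norm Zb)\<^sup>2"
    by simp_all
  ultimately have "(norm Za)\<^sup>2 \<le> 1" "(norm Zb)\<^sup>2 \<le> 1" "tb\<^sup>2 \<le> 1"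
    by linarith+
  then have Za: "norm Za \<le> 1" and Zb: "norm Zb \<le> 1" and tb: "\<bar>tb\<bar> \<le> 1"
    using abs_square_le_1[of tb] power2_le_imp_le[of "norm Za" 1] power2_le_imp_le[of "norm Zb" 1]
    by simp_all
  have A: "al \<le> A" "A \<le> 1"
    using horizontal Za ab unfolding A_def by (simp_all add: power_le_one)
  have B: "0 \<le> B" "B \<le> 1"
    using Zb unfolding B_def by (simp_all add: power_le_one)
  have ta: "ta\<^sup>2 = 1 - A"
    using unit unfolding A_def by simp
  have dZ: "norm (Zb - Za) \<le> al / 6"
    using close ab by simp
  have "R - A = inner (Zb - Za) Za"
    unfolding A_def R_def by (simp add: inner_diff_left power2_norm_eq_inner)
  then have "\<bar>R - A\<bar> \<le> al / 6"
    using Cauchy_Schwarz_ineq2[of "Zb - Za" Za] mult_mono[OF dZ Za] al by simp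
  moreover have "R \<le> 1"
    using norm_cauchy_schwarz[of Zb Za] mult_mono[OF Zb Za] unfolding R_def by simp
  ultimately have R: "A - al / 6 \<le> R" "R \<le> 1"
    using abs_le_D2 by fastforce+
  have "I = Im (herm (Zb - Za) Za)"
    unfolding I_def by (simp add: herm_diff_left)
  then have I: "\<bar>I\<bar> \<le> al / 6"
    using abs_Im_herm_le[of "Zb - Za" Za] mult_mono[OF dZ Za] al by simp
  define k where "k = 1 - al / 4 * u"
  have "al * u \<le> 1 * 1"
    using al u by (intro mult_mono) auto
  then have k: "k > 0"
    unfolding k_def by simp
  have fst_eq: "fst (heis_mult (heis_dil u b) (heis_inv a)) = u *\<^sub>R Zb - Za"
    using ab by (simp add: heis_mult_def heis_inv_def heis_dil_def)
  have fst: "(norm (fst (heis_mult (heis_dil u b) (heis_inv a))))\<^sup>2 = u\<^sup>2 * B - 2 * u * R + A"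
    unfolding fst_eq A_def B_def R_def power2_norm_eq_inner
    by (simp add: inner_commute power2_eq_square algebra_simps)
  have snd: "snd (heis_mult (heis_dil u b) (heis_inv a)) = u\<^sup>2 * tb - ta - u * I / 2"
    unfolding ab I_def
    by (simp add: heis_mult_def heis_inv_def heis_dil_def herm_minus_right herm_scaleR_left)
  show ?thesis
    unfolding heis_dist_eq_gauge heis_gauge_le_iff[OF k[unfolded k_def]] fst snd
    using dil_step_polynomial_ineq[OF al u A B R I ta tb] by simp
qed

lemma norm_fst_diff_le_heis_dist: "norm (fst x - fst y) \<le> heis_dist x y"
  using heis_gauge_bounds(1)[of "heis_mult x (heis_inv y)"]
  by (simp add: heis_dist_eq_gauge heis_mult_def heis_inv_def)

lemma heis_dist_le_of_close_hats:
  fixes p q :: "('n::finite) heis"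
  assumes al: "0 < al" "al \<le> 1" and "p \<noteq> 0" "q \<noteq> 0"
    and ratio: "10 * heis_gauge q \<le> al * heis_gauge p"
    and horizontal: "al \<le> (norm (fst (hat p)))\<^sup>2"
    and close: "heis_dist (hat p) (hat q) \<le> al / 6"
  shows "heis_dist q p \<le> heis_gauge p - al / 4 * heis_gauge q"
proof -
  define \<rho> u where "\<rho> = heis_gauge p" and "u = heis_gauge q / heis_gauge p"
  have "\<rho> > 0" "heis_gauge q > 0"
    using \<open>p \<noteq> 0\<close> \<open>q \<noteq> 0\<close> heis_gauge_nonneg heis_gauge_eq_0_iff unfolding \<rho>_def
    by (metis less_eq_real_def)+
  then have q: "heis_gauge q = \<rho> * u" and u: "0 < u" "u \<le> al / 10"
    using ratio unfolding \<rho>_def u_def by (simp_all add: divide_le_eq mult.commute)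
  have "heis_dil \<rho> (heis_dil u (hat q)) = q" "heis_dil \<rho> (hat p) = p"
    using heis_dil_gauge_hat[OF \<open>q \<noteq> 0\<close>] heis_dil_gauge_hat[OF \<open>p \<noteq> 0\<close>] q
    unfolding \<rho>_def heis_dil_dil by simp_all
  then have "heis_dist q p = \<rho> * heis_dist (heis_dil u (hat q)) (hat p)"
    using heis_dist_dil[of \<rho> "heis_dil u (hat q)" "hat p"] \<open>\<rho> > 0\<close> by simp
  also have "\<dots> \<le> \<rho> * (1 - al / 4 * u)"
    using heis_dist_dil_nearby_le[OF al u hat_unit_sphere hat_unit_sphere horizontal]
      norm_fst_diff_le_heis_dist[of "hat q" "hat p"] heis_dist_commute[of "hat p"] close
      \<open>p \<noteq> 0\<close> \<open>q \<noteq> 0\<close> \<open>\<rho> > 0\<close> by simp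
  finally show ?thesis
    unfolding q \<rho>_def by (simp add: algebra_simps)
qed

lemma shells_gauge_bounds:
  assumes t: "t \<ge> 1" "tt \<ge> 1" and rt: "96 * t \<le> rt" "96 * tt \<le> rt" and "rt \<le> r"
    and shells: "q \<in> shell t r p" "0 \<in> shell t r p" "0 \<in> shell tt rt q"
  shows "r / 2 \<le> heis_gauge p" "heis_gauge p < r + 6 * t"
    "rt / 2 \<le> heis_gauge q" "heis_gauge q \<le> 2 * rt" "r - 6 * t < heis_dist q p"
  using shell_heis_dist_bounds[OF shells(2)] shell_heis_dist_bounds[OF shells(3)]
    shell_heis_dist_bounds[OF shells(1)] assms
  by auto

lemma hat_heis_dist_gt:
  fixes p q :: "('n::finite) heis"
  assumes al: "0 < al" "al = 1 - taub\<^sup>2"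
    and t: "t \<ge> 1" "tt \<ge> 1" and r: "rt \<le> r" "t * tt * R \<le> rt" "rt \<le> eps * r"
    and shells: "q \<in> shell t r p" "0 \<in> shell t r p" "0 \<in> shell tt rt q"
    and R: "R > 96 / al" and eps: "eps < al / 40" and tau: "\<bar>snd (hat p)\<bar> \<le> taub"
  shows "heis_dist (hat p) (hat q) > al / 6"
proof (rule ccontr)
  assume "\<not> heis_dist (hat p) (hat q) > al / 6"
  then have close: "heis_dist (hat p) (hat q) \<le> al / 6"
    by simp
  have "al \<le> 1" "96 \<le> 96 / al" "96 < al * R"
    using al R by (simp_all add: le_divide_eq divide_less_eq mult.commute)
  then have "96 \<le> R"
    using R by linarith
  have "t * R * 1 \<le> t * R * tt" "tt * R * 1 \<le> tt * R * t"
    using t \<open>96 \<le> R\<close> by (intro mult_left_mono; simp)+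
  then have "t * R \<le> rt" "tt * R \<le> rt"
    using r(2) by (simp_all add: ac_simps)
  moreover have "96 * t \<le> t * R" "96 * tt \<le> tt * R"
    using \<open>96 \<le> R\<close> t by (simp_all add: mult.commute mult_left_mono)
  ultimately have rt: "96 * t \<le> rt" "96 * tt \<le> rt"
    by linarith+
  define \<rho> s where "\<rho> = heis_gauge p" and "s = heis_gauge q"
  have "0 < r" "0 < \<rho>" "0 < s" "r / 2 \<le> \<rho>" "\<rho> < r + 6 * t" "rt / 2 \<le> s" "s \<le> 2 * rt"
    and qp: "r - 6 * t < heis_dist q p"
    using shells_gauge_bounds[OF t rt r(1) shells, folded \<rho>_def s_def] rt t r(1) by linarith+
  then have "p \<noteq> 0" "q \<noteq> 0"
    unfolding \<rho>_def s_def by (metis heis_gauge_eq_0_iff less_irrefl)+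
  have "0 < eps"
    using r rt t \<open>0 < r\<close> by (smt (verit) mult_nonpos_nonneg)
  then have "eps * r \<le> 2 * (eps * \<rho>)"
    using \<open>r / 2 \<le> \<rho>\<close> mult_left_mono[of r "2 * \<rho>" eps] by simp
  moreover have "40 * (eps * \<rho>) \<le> al * \<rho>"
    using eps \<open>0 < \<rho>\<close> mult_right_mono[of "40 * eps" al \<rho>] by simp
  ultimately have "10 * s \<le> al * \<rho>"
    using \<open>s \<le> 2 * rt\<close> r(3) by linarith
  moreover have "(snd (hat p))\<^sup>2 \<le> taub\<^sup>2"
    using power_mono[OF tau abs_ge_zero, of 2] by simp
  then have "al \<le> (norm (fst (hat p)))\<^sup>2"
    using hat_unit_sphere[OF \<open>p \<noteq> 0\<close>] al by linarith
  ultimately have "heis_dist q p \<le> \<rho> - al / 4 * s"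
    using heis_dist_le_of_close_hats[OF al(1) \<open>al \<le> 1\<close> \<open>p \<noteq> 0\<close> \<open>q \<noteq> 0\<close> _ _ close]
    unfolding \<rho>_def s_def by blast
  moreover have "al * (t * R) \<le> al * (2 * s)"
    using \<open>t * R \<le> rt\<close> \<open>rt / 2 \<le> s\<close> al(1) by (intro mult_left_mono) auto
  moreover have "96 * t < al * (t * R)"
    using t mult_strict_left_mono[OF \<open>96 < al * R\<close>, of t] by (simp add: ac_simps)
  ultimately show False
    using qp \<open>\<rho> < r + 6 * t\<close> t by linarith
qed

theorem lemma12:
  fixes taub :: real
  assumes "0 < taub" and "taub < 1"
  shows "\<exists>rhob Rb phib epsb. rhob > 0 \<and> Rb > 0 \<and> phib > 0 \<and> epsb > 0 \<and>
    (\<forall>(p :: 'n::finite heis) q t tt R eps r rt.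
       p \<noteq> 0 \<and> q \<noteq> 0 \<and> t \<ge> 1 \<and> tt \<ge> 1 \<and> R > 1 \<and> eps > 0 \<and>
       r \<ge> rt \<and> rt \<ge> t * tt * R \<and> rt \<le> eps * r \<and>
       q \<in> shell t r p \<and> 0 \<in> shell t r p \<and> 0 \<in> shell tt rt q \<and>
       R > Rb \<and> eps < epsb \<and> \<bar>snd (hat p)\<bar> \<le> taub \<and>
       Max (range (\<lambda>i. phase_angle i p q)) < phib
       \<longrightarrow> heis_dist (hat p) (hat q) > rhob)"
proof -
  define al where "al = 1 - taub\<^sup>2"
  have "0 < al"
    using assms unfolding al_def by (simp add: power_less_one_iff abs_square_less_1)
  then show ?thesis
    using hat_heis_dist_gt[OF _ al_def]
    by (intro exI[of _ "al / 6"] exI[of _ "96 / al"] exI[of _ "1::real"] exI[of _ "al / 40"]) auto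
qed

end
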